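(* Let $b,q$ be integers with $1\le q<b$. For $\ell\in[b-1]$ let $Q_\ell\in\mathbb F_2^{q\times b}$ have a single entry $1$ at position $(\ell\bmod q,\ q+(\ell\bmod(b-q)))$ and zeros elsewhere; let $Q_b=(I_q\mid \mathbf 0)\in\mathbb F_2^{q\times b}$; and let $Q_\ell=\mathbf 0$ for $b<\ell<b+q$. Then the $bq\times bq$ block matrix $(Q_{b+j-i})_{i\in[b],\,j\in[q]}$ (block row $i$, block column $j$) is invertible over $\mathbb F_2$. (In the paper this is applied with $b=b_2$ to the RD code, the blocks $Q_\ell$ being $P'_\ell$ with the bottom $T-b_1-q$ rows deleted, and with $b=b_1$, $q<b_1$, to the SR code, the blocks being $P_{(p-1)b_1+\ell}$ with the first $b_2$ rows, the last $(p-1)b_2$ rows and the last $b_2-b_1$ columns deleted.)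
   Context: Convention: $m\bmod n$ denotes the representative of $m$ modulo $n$ in $\{1,\dots,n\}$ (so it takes values $1,\dots,n$). *)

theory Defs
  imports "HOL-Library.Z2" "Jordan_Normal_Form.Matrix"
begin

definition mod1 :: "nat \<Rightarrow> nat \<Rightarrow> nat" where
  "mod1 m n = ((m - 1) mod n) + 1"

text \<open>Entry (r,c) (1-based, r \<in> [q], c \<in> [b]) of the block Q_l over F_2 (type bit).\<close>
definition Qentry :: "nat \<Rightarrow> nat \<Rightarrow> nat \<Rightarrow> nat \<Rightarrow> nat \<Rightarrow> bit" where
  "Qentry b q l r c =
     (if 1 \<le> l \<and> l \<le> b - 1 then
        (if r = mod1 l q \<and> c = q + mod1 l (b - q) then 1 else 0)
      else if l = b then (if r = c then 1 else 0)
      else 0)"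

text \<open>The bq x bq block matrix (Q_{b+j-i}), block row i \<in> [b], block column j \<in> [q];
  0-based global indices: row (i-1)*q + (r-1), column (j-1)*b + (c-1).\<close>
definition blockQ :: "nat \<Rightarrow> nat \<Rightarrow> bit mat" where
  "blockQ b q = mat (b * q) (b * q) (\<lambda>(x, y).
     (let i = x div q + 1; r = x mod q + 1; j = y div b + 1; c = y mod b + 1
      in Qentry b q (b + j - i) r c))"

end

(*
  Index rows by (block row i, row r) and columns by (block column j, column c), 0-based.
  The left q columns of every block column meet only the identity block Q_b, which lies on
  the block diagonal, so they are distinct unit vectors. A row in block row i >= q meets
  only single-entry blocks Q_l with l = b + j - i < b; since l mod q determines j, such a
  row has at most one entry 1, and as i runs over the b - q lower block rows every right
  column (c >= q) occurs as the only 1 of some row. So a kernel vector first vanishes on the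
  right columns, and then on the left ones: the row holding the 1 of a left column has its
  other nonzero entries in right columns only.
*)

theory Submission
  imports Defs "Jordan_Normal_Form.Determinant" "HOL-Number_Theory.Cong"
begin

lemma invertible_mat_if_trivial_kernel:
  fixes A :: "'a::field mat"
  assumes A: "A \<in> carrier_mat n n"
    and kernel: "\<And>v. v \<in> carrier_vec n \<Longrightarrow> A *\<^sub>v v = 0\<^sub>v n \<Longrightarrow> v = 0\<^sub>v n"
  shows "invertible_mat A"
proof -
  have "det A \<noteq> 0"
    using det_0_iff_vec_prod_zero[OF A] kernel by blast
  then have "A \<in> Units (ring_mat TYPE('a) n ())"
    by (rule det_non_zero_imp_unit[OF A])
  then obtain B where "B \<in> carrier_mat n n" "B * A = 1\<^sub>m n" "A * B = 1\<^sub>m n"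
    unfolding Units_def ring_mat_def by auto
  with A show ?thesis
    unfolding invertible_mat_def inverts_mat_def by auto
qed

lemma index_zero_if_isolated_in_row:
  fixes A :: "'a::semiring_no_zero_divisors mat"
  assumes "(A *\<^sub>v v) $ x = 0" "x < dim_row A" "dim_vec v = dim_col A"
    and "y < dim_col A" "A $$ (x, y) \<noteq> 0"
    and isolated: "\<And>y'. y' < dim_col A \<Longrightarrow> y' \<noteq> y \<Longrightarrow> A $$ (x, y') * v $ y' = 0"
  shows "v $ y = 0"
proof -
  have "0 = (\<Sum>y'\<in>{0..<dim_col A}. A $$ (x, y') * v $ y')"
    using assms(1-3) by (simp add: scalar_prod_def)
  also have "\<dots> = (\<Sum>y'\<in>{y}. A $$ (x, y') * v $ y')"
    using assms(4) isolated by (intro sum.mono_neutral_right) auto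
  finally show ?thesis
    using assms(5) by simp
qed

lemma exists_add_mod_eq:
  fixes k :: nat
  assumes "0 < k" "c < k"
  obtains s where "s < k" "(j + s) mod k = c"
proof (rule that)
  have "j \<le> k * j"
    using assms(1) by simp
  then have "j + (c + k * j - j) = c + k * j"
    by linarith
  then show "(j + (c + k * j - j) mod k) mod k = c"
    using assms by (simp add: mod_add_right_eq)
qed (use assms in simp)

lemma add_mod_cancel_right_less:
  fixes j j' :: nat
  assumes "j < k" "j' < k" "(j + s) mod k = (j' + s) mod k"
  shows "j = j'"
  using assms by (metis cong_add_rcancel_nat cong_def mod_less)

lemma mult_add_less_mult:
  fixes i r :: nat
  assumes "i < b" "r < q"
  shows "i * q + r < b * q"
proof -
  have "i * q + r < Suc i * q"
    using assms(2) by simp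
  also have "\<dots> \<le> b * q"
    using assms(1) by (intro mult_le_mono1) simp
  finally show ?thesis .
qed

lemma less_mult_cases:
  fixes y :: nat
  assumes "y < b * q"
  obtains j c where "j < q" "c < b" "y = j * b + c"
proof (rule that)
  show "y div b < q"
    using assms by (simp add: less_mult_imp_div_less mult.commute)
  show "y mod b < b"
    using assms by (cases "b = 0") simp_all
qed simp

lemma dim_row_blockQ [simp]: "dim_row (blockQ b q) = b * q"
  by (simp add: blockQ_def)

lemma dim_col_blockQ [simp]: "dim_col (blockQ b q) = b * q"
  by (simp add: blockQ_def)

lemma blockQ_carrier: "blockQ b q \<in> carrier_mat (b * q) (b * q)"
  by (simp add: carrier_matI)

lemma index_blockQ:
  assumes "i < b" "r < q" "j < q" "c < b"
  shows "blockQ b q $$ (i * q + r, j * b + c) = Qentry b q (b + j - i) (Suc r) (Suc c)"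
proof -
  have "i * q + r < b * q" "j * b + c < b * q"
    using mult_add_less_mult[of i b r q] mult_add_less_mult[of j q c b] assms
    by (simp_all add: mult.commute)
  then show ?thesis
    using assms by (simp add: blockQ_def)
qed

lemma index_blockQ_left_column:
  assumes "q < b" "i < b" "r < q" "j < q" "c < q"
  shows "blockQ b q $$ (i * q + r, j * b + c) = (if i = j \<and> r = c then 1 else 0)"
  using assms by (auto simp: index_blockQ Qentry_def mod1_def)

lemma index_blockQ_lower_row:
  assumes "q \<le> i" "i < b" "r < q" "j < q" "c < b"
  shows "blockQ b q $$ (i * q + r, j * b + c) =
    (if r = (j + (b - Suc i)) mod q \<and> c = q + (j + (b - Suc i)) mod (b - q) then 1 else 0)"
proof -
  have "1 \<le> b + j - i" "b + j - i \<le> b - 1" "b + j - i - 1 = j + (b - Suc i)"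
    using assms by auto
  then show ?thesis
    using assms by (simp add: index_blockQ Qentry_def mod1_def)
qed

lemma blockQ_kernel_right_column:
  assumes "q < b" "v \<in> carrier_vec (b * q)" "blockQ b q *\<^sub>v v = 0\<^sub>v (b * q)"
    and "j < q" "q \<le> c" "c < b"
  shows "v $ (j * b + c) = 0"
proof -
  have "0 < b - q" "c - q < b - q"
    using assms(1,5,6) by auto
  then obtain s where s: "s < b - q" "(j + s) mod (b - q) = c - q"
    by (rule exists_add_mod_eq)
  \<comment> \<open>In block row i = b - 1 - s the block index satisfies l - 1 = j' + s.\<close>
  define i where "i = b - Suc s"
  define r where "r = (j + s) mod q"
  have i: "q \<le> i" "i < b" "b - Suc i = s"
    using s(1) unfolding i_def by auto
  have r: "r < q"
    using assms(4) unfolding r_def by simp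
  have entry: "blockQ b q $$ (i * q + r, j' * b + c') = (if j' = j \<and> c' = c then 1 else 0)"
    if "j' < q" "c' < b" for j' c'
  proof -
    have "r = (j' + s) mod q \<longleftrightarrow> j' = j"
      using add_mod_cancel_right_less[of j q j' s] assms(4) that(1) unfolding r_def by auto
    then show ?thesis
      using index_blockQ_lower_row[OF i(1,2) r that] i(3) s(2) assms(5) by auto
  qed
  have index_less: "i * q + r < b * q" "j * b + c < b * q"
    using mult_add_less_mult[OF i(2) r] mult_add_less_mult[OF assms(4,6)]
    by (simp_all add: mult.commute)
  show ?thesis
  proof (rule index_zero_if_isolated_in_row[of "blockQ b q" v "i * q + r"])
    fix y' assume "y' < dim_col (blockQ b q)" "y' \<noteq> j * b + c"
    then obtain j' c' where "j' < q" "c' < b" "y' = j' * b + c'" "y' \<noteq> j * b + c"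
      by (auto elim: less_mult_cases)
    then show "blockQ b q $$ (i * q + r, y') * v $ y' = 0"
      using entry by auto
  qed (use assms entry index_less in auto)
qed

lemma blockQ_kernel_left_column:
  assumes "q < b" "v \<in> carrier_vec (b * q)" "blockQ b q *\<^sub>v v = 0\<^sub>v (b * q)"
    and "j < q" "c < q"
  shows "v $ (j * b + c) = 0"
proof (rule index_zero_if_isolated_in_row[of "blockQ b q" v "j * q + c"])
  have "j < b" "c < b"
    using assms(1,4,5) by auto
  then have "j * q + c < b * q" "j * b + c < b * q"
    using mult_add_less_mult[of j b c q] mult_add_less_mult[of j q c b] assms(4,5)
    by (simp_all add: mult.commute)
  then show "(blockQ b q *\<^sub>v v) $ (j * q + c) = 0" "j * q + c < dim_row (blockQ b q)"
    "dim_vec v = dim_col (blockQ b q)" "j * b + c < dim_col (blockQ b q)"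
    "blockQ b q $$ (j * q + c, j * b + c) \<noteq> 0"
    using assms index_blockQ_left_column[OF assms(1) \<open>j < b\<close> assms(5,4,5)] by auto
  fix y' assume "y' < dim_col (blockQ b q)" "y' \<noteq> j * b + c"
  then obtain j' c' where y': "j' < q" "c' < b" "y' = j' * b + c'" "y' \<noteq> j * b + c"
    by (auto elim: less_mult_cases)
  show "blockQ b q $$ (j * q + c, y') * v $ y' = 0"
  proof (cases "q \<le> c'")
    case True
    then show ?thesis
      using blockQ_kernel_right_column[OF assms(1-3) y'(1) True y'(2)] y'(3) by simp
  next
    case False
    then show ?thesis
      using index_blockQ_left_column[OF assms(1) \<open>j < b\<close> assms(5) y'(1)] y' by auto
  qed
qed

lemma blockQ_kernel_trivial:
  assumes "q < b" "v \<in> carrier_vec (b * q)" "blockQ b q *\<^sub>v v = 0\<^sub>v (b * q)"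
  shows "v = 0\<^sub>v (b * q)"
proof (rule eq_vecI)
  fix y assume "y < dim_vec (0\<^sub>v (b * q))"
  then obtain j c where "j < q" "c < b" "y = j * b + c"
    by (auto elim: less_mult_cases)
  then show "v $ y = 0\<^sub>v (b * q) $ y"
    using blockQ_kernel_left_column[OF assms] blockQ_kernel_right_column[OF assms]
      \<open>y < dim_vec (0\<^sub>v (b * q))\<close> by (cases "q \<le> c") auto
qed (use assms(2) in simp)

theorem mainTheorem10:
  fixes b q :: nat
  assumes "1 \<le> q" and "q < b"
  shows "invertible_mat (blockQ b q)"
  using invertible_mat_if_trivial_kernel[OF blockQ_carrier] blockQ_kernel_trivial[OF assms(2)]
  by blast

end
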